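(* Let $V$ be a finite-dimensional space of $k$-forms on $T^n$ and let $\{E_{F,F'}:F\subseteq F'\subseteq T^n\}$ be a consistent family of extension operators. For $0\le d\le n$ let $$W_d:=\bigoplus_{F\subseteq T^n,\ \dim F=d}E_{F,T^n}\mathring V(F).$$ Then $V_d=W_d\oplus V_{d+1}$ for each $d$, where $V_d$ is the subspace of forms in $V$ whose traces vanish on all $(d-1)$-dimensional faces of $T^n$.
   Context: $T^n\subset\mathbb R^{n+1}$ is the standard simplex $\{\lambda_i\ge0,\ \sum\lambda_i=1\}$. For a face $F$, $V(F)=\mathrm{tr}_{T^n,F}(V)$, where $\mathrm{tr}_{F',F}$ denotes pullback of forms from a face $F'$ to a subface $F$; $\mathring V(F)$ is the subspace of $V(F)$ of forms with vanishing trace on $\partial F$. $V_0=V$, $V_{n+1}=0$. For faces $K\subseteq F$, a linear map $E_{K,F}:V(K)\to V(F)$ is an extension operator if $\mathrm{tr}_{F,K}E_{K,F}\alpha=\alpha$ for all $\alpha\in V(K)$. A family of extension operators $\{E_{F,F'}\}$ is consistent if for any subfaces $F,F'$ of a face $H$, with $K=F\cap F'$, one has $\mathrm{tr}_{H,F'}\circ E_{F,H}=E_{K,F'}\circ\mathrm{tr}_{F,K}$ on $V(F)$. (Part of the claim is that the sum defining $W_d$ is direct.) *)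

theory Defs
  imports Complex_Main "HOL-Library.Function_Algebras"
begin

text \<open>Points and tangent vectors of \<open>\<real>\<^sup>n\<^sup>+\<^sup>1\<close> are functions \<open>nat \<Rightarrow> real\<close> (coordinates
  \<open>\<lambda>\<^sub>0,...,\<lambda>\<^sub>n\<close>, the remaining ones being 0).  A face of \<open>T\<^sup>n\<close> is given by its vertex set
  \<open>S \<subseteq> {..n}\<close> (dimension \<open>card S - 1\<close>); \<open>S = {}\<close> is the empty face.\<close>

type_synonym form = "(nat \<Rightarrow> real) \<Rightarrow> (nat \<Rightarrow> real) list \<Rightarrow> real"

definition face_pts :: "nat set \<Rightarrow> (nat \<Rightarrow> real) set" where
  "face_pts S = {x. (\<forall>i. i \<notin> S \<longrightarrow> x i = 0) \<and> (\<forall>i\<in>S. 0 \<le> x i) \<and> (\<Sum>i\<in>S. x i) = 1}"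

definition tangent :: "nat set \<Rightarrow> (nat \<Rightarrow> real) set" where
  "tangent S = {v. (\<forall>i. i \<notin> S \<longrightarrow> v i = 0) \<and> (\<Sum>i\<in>S. v i) = 0}"

text \<open>A (not necessarily smooth) differential k-form on the face S: at each point of the face an
  alternating k-linear form on the tangent space of the face; normalised to be 0 elsewhere.\<close>
definition is_kform :: "nat \<Rightarrow> nat set \<Rightarrow> form \<Rightarrow> bool" where
  "is_kform k S \<omega> \<longleftrightarrow>
     (\<forall>x vs. x \<notin> face_pts S \<or> length vs \<noteq> k \<or> \<not> set vs \<subseteq> tangent S \<longrightarrow> \<omega> x vs = 0) \<and>
     (\<forall>x\<in>face_pts S.
        (\<forall>as bs v w c. length as + length bs + 1 = k \<longrightarrow> set (as @ bs) \<subseteq> tangent S \<longrightarrow>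
            v \<in> tangent S \<longrightarrow> w \<in> tangent S \<longrightarrow>
            \<omega> x (as @ (\<lambda>j. c * v j + w j) # bs) = c * \<omega> x (as @ v # bs) + \<omega> x (as @ w # bs)) \<and>
        (\<forall>vs. length vs = k \<longrightarrow> set vs \<subseteq> tangent S \<longrightarrow> \<not> distinct vs \<longrightarrow> \<omega> x vs = 0))"

definition fscale :: "real \<Rightarrow> form \<Rightarrow> form" where
  "fscale c \<omega> = (\<lambda>x vs. c * \<omega> x vs)"

text \<open>Since forms on a face
  are normalised to vanish off that face, \<open>tr\<^sub>F\<^sub>',\<^sub>F\<close> does not depend on \<open>F'\<close>.\<close>
definition tr :: "nat set \<Rightarrow> form \<Rightarrow> form" where
  "tr F \<omega> = (\<lambda>x vs. if x \<in> face_pts F \<and> set vs \<subseteq> tangent F then \<omega> x vs else 0)"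

definition is_fin_dim_space :: "form set \<Rightarrow> bool" where
  "is_fin_dim_space V \<longleftrightarrow> 0 \<in> V \<and> (\<forall>a\<in>V. \<forall>b\<in>V. a + b \<in> V) \<and> (\<forall>c. \<forall>a\<in>V. fscale c a \<in> V) \<and>
     (\<exists>B. finite B \<and> B \<subseteq> V \<and> V = {\<Sum>b\<in>B. fscale (u b) b | u. True})"

definition Vf :: "form set \<Rightarrow> nat set \<Rightarrow> form set" where
  "Vf V F = tr F ` V"

definition Vring :: "form set \<Rightarrow> nat set \<Rightarrow> form set" where
  "Vring V F = {\<beta> \<in> Vf V F. \<forall>G. G \<subset> F \<longrightarrow> tr G \<beta> = 0}"

text \<open>\<open>V\<^sub>d\<close>: forms whose traces vanish on all (d-1)-dimensional faces (= d vertices).\<close>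
definition Vsub :: "nat \<Rightarrow> form set \<Rightarrow> nat \<Rightarrow> form set" where
  "Vsub n V d = {\<alpha> \<in> V. \<forall>F. F \<subseteq> {..n} \<and> card F = d \<longrightarrow> tr F \<alpha> = 0}"

definition faces_of_dim :: "nat \<Rightarrow> nat \<Rightarrow> nat set set" where
  "faces_of_dim n d = {F. F \<subseteq> {..n} \<and> card F = d + 1}"

definition Wsub :: "nat \<Rightarrow> form set \<Rightarrow> (nat set \<Rightarrow> nat set \<Rightarrow> form \<Rightarrow> form) \<Rightarrow> nat \<Rightarrow> form set" where
  "Wsub n V E d = {\<Sum>F\<in>faces_of_dim n d. E F {..n} (\<beta> F) | \<beta>.
                     \<forall>F\<in>faces_of_dim n d. \<beta> F \<in> Vring V F}"

definition is_extension_family :: "nat \<Rightarrow> form set \<Rightarrow> (nat set \<Rightarrow> nat set \<Rightarrow> form \<Rightarrow> form) \<Rightarrow> bool" where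
  "is_extension_family n V E \<longleftrightarrow>
     (\<forall>K F. K \<subseteq> F \<and> F \<subseteq> {..n} \<longrightarrow>
        (\<forall>\<alpha>\<in>Vf V K. E K F \<alpha> \<in> Vf V F \<and> tr K (E K F \<alpha>) = \<alpha>) \<and>
        (\<forall>\<alpha>\<in>Vf V K. \<forall>\<beta>\<in>Vf V K. E K F (\<alpha> + \<beta>) = E K F \<alpha> + E K F \<beta>) \<and>
        (\<forall>c. \<forall>\<alpha>\<in>Vf V K. E K F (fscale c \<alpha>) = fscale c (E K F \<alpha>)))"

definition is_consistent :: "nat \<Rightarrow> form set \<Rightarrow> (nat set \<Rightarrow> nat set \<Rightarrow> form \<Rightarrow> form) \<Rightarrow> bool" where
  "is_consistent n V E \<longleftrightarrow>
     (\<forall>F F' H. F \<subseteq> H \<and> F' \<subseteq> H \<and> H \<subseteq> {..n} \<longrightarrow>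
        (\<forall>\<alpha>\<in>Vf V F. tr F' (E F H \<alpha>) = E (F \<inter> F') F' (tr (F \<inter> F') \<alpha>)))"

end

theory Submission
  imports Defs
begin

text \<open>For \<open>\<beta> \<in> V\<^sup>\<circ>(F)\<close> and a face \<open>G\<close> with no more vertices than \<open>F\<close>, consistency gives
  \<open>tr\<^sub>G E\<^sub>F\<^sub>,\<^sub>T \<beta> = E\<^sub>F\<^sub>\<inter>\<^sub>G\<^sub>,\<^sub>G tr\<^sub>F\<^sub>\<inter>\<^sub>G \<beta>\<close>, and \<open>F \<inter> G\<close> is a proper subface of \<open>F\<close> unless \<open>G = F\<close>;
  so this trace is \<open>\<beta>\<close> if \<open>G = F\<close> and 0 otherwise.  Hence the traces of \<open>\<Sum>\<^sub>F E\<^sub>F\<^sub>,\<^sub>T \<beta>\<^sub>F\<close> on the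
  \<open>d\<close>-faces are exactly the \<open>\<beta>\<^sub>G\<close>, while those on smaller faces vanish.  For \<open>\<alpha> \<in> V\<^sub>d\<close> the traces
  \<open>tr\<^sub>F \<alpha>\<close> on \<open>d\<close>-faces lie in \<open>V\<^sup>\<circ>(F)\<close>, and \<open>\<alpha> - \<Sum>\<^sub>F E\<^sub>F\<^sub>,\<^sub>T tr\<^sub>F \<alpha>\<close> has vanishing traces on all
  \<open>d\<close>-faces, i.e. lies in \<open>V\<^sub>d\<^sub>+\<^sub>1\<close>.  Conversely, if \<open>\<Sum>\<^sub>F E\<^sub>F\<^sub>,\<^sub>T \<beta>\<^sub>F + u = 0\<close> with \<open>u \<in> V\<^sub>d\<^sub>+\<^sub>1\<close>, the
  trace on each \<open>d\<close>-face \<open>G\<close> yields \<open>\<beta>\<^sub>G = 0\<close>, which makes the sum direct.\<close>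

lemma tr_zero [simp]: "tr G 0 = 0"
  by (auto simp: tr_def fun_eq_iff)

lemma tr_add: "tr G (a + b) = tr G a + tr G b"
  by (auto simp: tr_def fun_eq_iff)

lemma tr_diff: "tr G (a - b) = tr G a - tr G b"
  by (auto simp: tr_def fun_eq_iff)

lemma tr_sum: "tr G (\<Sum>x\<in>A. f x) = (\<Sum>x\<in>A. tr G (f x))"
  using sum_comp_morphism[of "tr G" f A] by (simp add: tr_add o_def)

lemma face_pts_mono:
  assumes "G \<subseteq> F" "finite F"
  shows "face_pts G \<subseteq> face_pts F"
proof
  fix x assume x: "x \<in> face_pts G"
  have "(\<Sum>i\<in>F. x i) = (\<Sum>i\<in>G. x i)"
    using x assms by (intro sum.mono_neutral_right) (auto simp: face_pts_def)
  with x assms show "x \<in> face_pts F" unfolding face_pts_def by auto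
qed

lemma tangent_mono:
  assumes "G \<subseteq> F" "finite F"
  shows "tangent G \<subseteq> tangent F"
proof
  fix v assume v: "v \<in> tangent G"
  have "(\<Sum>i\<in>F. v i) = (\<Sum>i\<in>G. v i)"
    using v assms by (intro sum.mono_neutral_right) (auto simp: tangent_def)
  with v assms show "v \<in> tangent F" unfolding tangent_def by auto
qed

lemma tr_tr_subface:
  assumes "G \<subseteq> F" "finite F"
  shows "tr G (tr F a) = tr G a"
  using face_pts_mono[OF assms] tangent_mono[OF assms] by (auto simp: tr_def fun_eq_iff)

lemma tr_kform: "is_kform k F \<omega> \<Longrightarrow> tr F \<omega> = \<omega>"
  unfolding is_kform_def tr_def fun_eq_iff by metis

lemma fin_dim_space_sum:
  assumes "is_fin_dim_space V" "\<And>x. x \<in> A \<Longrightarrow> f x \<in> V"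
  shows "(\<Sum>x\<in>A. f x) \<in> V"
  using assms(2) by (induction A rule: infinite_finite_induct)
    (use assms(1) in \<open>auto simp: is_fin_dim_space_def\<close>)

lemma fin_dim_space_add: "is_fin_dim_space V \<Longrightarrow> a \<in> V \<Longrightarrow> b \<in> V \<Longrightarrow> a + b \<in> V"
  by (simp add: is_fin_dim_space_def)

lemma fin_dim_space_diff:
  assumes "is_fin_dim_space V" "a \<in> V" "b \<in> V"
  shows "a - b \<in> V"
proof -
  have "a + fscale (-1) b \<in> V"
    using assms by (simp add: fin_dim_space_add is_fin_dim_space_def)
  moreover have "fscale (-1) b = - b"
    by (simp add: fscale_def fun_eq_iff)
  ultimately show ?thesis
    by simp
qed

lemma Vsub_antimono:
  assumes "m \<le> m'" "m' \<le> n + 1"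
  shows "Vsub n V m' \<subseteq> Vsub n V m"
proof (intro subsetI)
  fix a assume a: "a \<in> Vsub n V m'"
  have "tr G a = 0" if G: "G \<subseteq> {..n}" "card G = m" for G
  proof -
    obtain G' where G': "G \<subseteq> G'" "G' \<subseteq> {..n}" "card G' = m'"
      using exists_subset_between[of G m' "{..n}"] G assms by auto
    then have "finite G'"
      using finite_subset by blast
    with G' a show ?thesis
      using tr_tr_subface[of G G' a] unfolding Vsub_def by auto
  qed
  with a show "a \<in> Vsub n V m"
    unfolding Vsub_def by auto
qed

lemma faces_of_dim_iff: "F \<in> faces_of_dim n d \<longleftrightarrow> F \<subseteq> {..n} \<and> card F = d + 1"
  by (simp add: faces_of_dim_def)

lemma finite_faces_of_dim: "finite (faces_of_dim n d)"
  by (rule finite_subset[of _ "Pow {..n}"]) (auto simp: faces_of_dim_def)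

lemma tr_Vsub_in_Vring:
  assumes "a \<in> Vsub n V d" "F \<in> faces_of_dim n d"
  shows "tr F a \<in> Vring V F"
proof -
  have F: "F \<subseteq> {..n}" "card F = d + 1" "finite F"
    using assms(2) finite_subset by (auto simp: faces_of_dim_iff)
  have "tr G (tr F a) = 0" if "G \<subset> F" for G
  proof -
    have "card G \<le> d"
      using psubset_card_mono[OF F(3) that] F(2) by simp
    moreover have "card F \<le> n + 1"
      using card_mono[OF _ F(1)] by simp
    ultimately have "a \<in> Vsub n V (card G)"
      using assms(1) Vsub_antimono[of "card G" d n V] F(2) by auto
    with that F show ?thesis
      using tr_tr_subface[of G F a] unfolding Vsub_def by auto
  qed
  with assms(1) show ?thesis
    unfolding Vring_def Vf_def Vsub_def by auto
qed

locale consistent_extension_family =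
  fixes n k :: nat and V :: "form set" and E :: "nat set \<Rightarrow> nat set \<Rightarrow> form \<Rightarrow> form"
  assumes space: "is_fin_dim_space V"
    and kforms: "\<forall>\<omega>\<in>V. is_kform k {..n} \<omega>"
    and extension: "is_extension_family n V E"
    and consistent: "is_consistent n V E"
begin

lemma Vf_top: "Vf V {..n} = V"
proof -
  have "tr {..n} ` V = id ` V"
    using kforms tr_kform by (intro image_cong) auto
  then show ?thesis
    by (simp add: Vf_def)
qed

lemma ext_in_Vf: "K \<subseteq> F \<Longrightarrow> F \<subseteq> {..n} \<Longrightarrow> a \<in> Vf V K \<Longrightarrow> E K F a \<in> Vf V F"
  using extension unfolding is_extension_family_def by (metis (no_types, lifting))

lemma tr_ext: "K \<subseteq> F \<Longrightarrow> F \<subseteq> {..n} \<Longrightarrow> a \<in> Vf V K \<Longrightarrow> tr K (E K F a) = a"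
  using extension unfolding is_extension_family_def by (metis (no_types, lifting))

lemma ext_fscale:
  "K \<subseteq> F \<Longrightarrow> F \<subseteq> {..n} \<Longrightarrow> a \<in> Vf V K \<Longrightarrow> E K F (fscale c a) = fscale c (E K F a)"
  using extension unfolding is_extension_family_def by (metis (no_types, lifting))

lemma ext_zero:
  assumes "K \<subseteq> F" "F \<subseteq> {..n}"
  shows "E K F 0 = 0"
proof -
  have "0 \<in> V"
    using space unfolding is_fin_dim_space_def by blast
  then have "0 \<in> Vf V K"
    unfolding Vf_def by force
  then have "E K F (fscale 0 0) = fscale 0 (E K F 0)"
    using ext_fscale assms by blast
  then show ?thesis
    by (simp add: fscale_def zero_fun_def)
qed

lemma tr_ext_top:
  "F \<subseteq> {..n} \<Longrightarrow> G \<subseteq> {..n} \<Longrightarrow> a \<in> Vf V F \<Longrightarrow>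
    tr G (E F {..n} a) = E (F \<inter> G) G (tr (F \<inter> G) a)"
  using consistent unfolding is_consistent_def by (metis (no_types, lifting) order_refl)

lemma tr_ext_Vring:
  assumes b: "b \<in> Vring V F" and F: "F \<subseteq> {..n}" and G: "G \<subseteq> {..n}" "card G \<le> card F"
  shows "tr G (E F {..n} b) = (if G = F then b else 0)"
proof (cases "G = F")
  case True
  with b F show ?thesis
    using tr_ext[of F "{..n}" b] by (simp add: Vring_def)
next
  case False
  have "finite G"
    using G(1) finite_subset by blast
  then have "\<not> F \<subseteq> G"
    using card_seteq G(2) False by blast
  then have "tr (F \<inter> G) b = 0"
    using b unfolding Vring_def by blast
  with b F G(1) False show ?thesis
    using tr_ext_top[of F G b] ext_zero[of "F \<inter> G" G] by (simp add: Vring_def)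
qed

lemma ext_Vring_in_V: "b \<in> Vring V F \<Longrightarrow> F \<subseteq> {..n} \<Longrightarrow> E F {..n} b \<in> V"
  using ext_in_Vf[of F "{..n}" b] Vf_top by (simp add: Vring_def)

lemma Wsum_in_V:
  assumes "\<forall>F\<in>faces_of_dim n d. \<beta> F \<in> Vring V F"
  shows "(\<Sum>F\<in>faces_of_dim n d. E F {..n} (\<beta> F)) \<in> V"
  using assms space ext_Vring_in_V by (intro fin_dim_space_sum) (auto simp: faces_of_dim_iff)

lemma tr_Wsum:
  assumes \<beta>: "\<forall>F\<in>faces_of_dim n d. \<beta> F \<in> Vring V F" and G: "G \<subseteq> {..n}" "card G \<le> d + 1"
  shows "tr G (\<Sum>F\<in>faces_of_dim n d. E F {..n} (\<beta> F))
    = (if G \<in> faces_of_dim n d then \<beta> G else 0)"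
proof -
  have "tr G (\<Sum>F\<in>faces_of_dim n d. E F {..n} (\<beta> F))
      = (\<Sum>F\<in>faces_of_dim n d. if G = F then \<beta> F else 0)"
    unfolding tr_sum using \<beta> G tr_ext_Vring by (intro sum.cong) (auto simp: faces_of_dim_iff)
  also have "\<dots> = (if G \<in> faces_of_dim n d then \<beta> G else 0)"
    using finite_faces_of_dim by (simp add: sum.delta)
  finally show ?thesis .
qed

lemma Vsub_subset_Wsub_plus:
  "Vsub n V d \<subseteq> {w + u | w u. w \<in> Wsub n V E d \<and> u \<in> Vsub n V (d + 1)}"
proof (intro subsetI)
  fix a assume a: "a \<in> Vsub n V d"
  define w where "w = (\<Sum>F\<in>faces_of_dim n d. E F {..n} (tr F a))"
  have \<beta>: "\<forall>F\<in>faces_of_dim n d. tr F a \<in> Vring V F"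
    using tr_Vsub_in_Vring[OF a] by blast
  then have "w \<in> Wsub n V E d"
    unfolding Wsub_def w_def by (intro CollectI exI[of _ "\<lambda>F. tr F a"]) simp
  moreover have "a - w \<in> Vsub n V (d + 1)"
  proof -
    have "tr G (a - w) = 0" if "G \<subseteq> {..n}" "card G = d + 1" for G
      using that tr_Wsum[OF \<beta>, of G] unfolding w_def tr_diff by (simp add: faces_of_dim_iff)
    moreover have "a - w \<in> V"
      using a Wsum_in_V[OF \<beta>] space fin_dim_space_diff unfolding w_def Vsub_def by blast
    ultimately show ?thesis
      unfolding Vsub_def by blast
  qed
  ultimately show "a \<in> {w + u | w u. w \<in> Wsub n V E d \<and> u \<in> Vsub n V (d + 1)}"
    by force
qed

lemma Wsub_plus_subset_Vsub:
  assumes "d \<le> n"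
  shows "{w + u | w u. w \<in> Wsub n V E d \<and> u \<in> Vsub n V (d + 1)} \<subseteq> Vsub n V d"
proof (intro subsetI)
  fix a assume "a \<in> {w + u | w u. w \<in> Wsub n V E d \<and> u \<in> Vsub n V (d + 1)}"
  then obtain \<beta> u where \<beta>: "\<forall>F\<in>faces_of_dim n d. \<beta> F \<in> Vring V F"
    and u: "u \<in> Vsub n V (d + 1)" and a: "a = (\<Sum>F\<in>faces_of_dim n d. E F {..n} (\<beta> F)) + u"
    unfolding Wsub_def by blast
  have "u \<in> Vsub n V d"
    using u Vsub_antimono[of d "d + 1" n V] assms by auto
  then have "tr G a = 0" if "G \<subseteq> {..n}" "card G = d" for G
    using that tr_Wsum[OF \<beta>, of G] unfolding a tr_add Vsub_def by (simp add: faces_of_dim_iff)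
  moreover have "a \<in> V"
    using fin_dim_space_add[OF space Wsum_in_V[OF \<beta>]] u unfolding a Vsub_def by blast
  ultimately show "a \<in> Vsub n V d"
    unfolding Vsub_def by blast
qed

lemma Wsum_plus_Vsub_eq_0:
  assumes \<beta>: "\<forall>F\<in>faces_of_dim n d. \<beta> F \<in> Vring V F" and u: "u \<in> Vsub n V (d + 1)"
    and sum_eq_0: "(\<Sum>F\<in>faces_of_dim n d. E F {..n} (\<beta> F)) + u = 0"
  shows "(\<forall>F\<in>faces_of_dim n d. E F {..n} (\<beta> F) = 0) \<and> u = 0"
proof -
  have "\<beta> G = 0" if G: "G \<in> faces_of_dim n d" for G
    using arg_cong[OF sum_eq_0, of "tr G"] u G tr_Wsum[OF \<beta>, of G]
    unfolding tr_add Vsub_def by (simp add: faces_of_dim_iff)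
  then have ext_0: "\<forall>F\<in>faces_of_dim n d. E F {..n} (\<beta> F) = 0"
    using ext_zero by (simp add: faces_of_dim_iff)
  with sum_eq_0 show ?thesis
    by simp
qed

end

theorem propositionA2:
  fixes n k d :: nat and V :: "form set" and E :: "nat set \<Rightarrow> nat set \<Rightarrow> form \<Rightarrow> form"
  assumes "is_fin_dim_space V"
    and "\<forall>\<omega>\<in>V. is_kform k {..n} \<omega>"
    and "is_extension_family n V E"
    and "is_consistent n V E"
    and "d \<le> n"
  shows "Vsub n V d = {w + u | w u. w \<in> Wsub n V E d \<and> u \<in> Vsub n V (d + 1)}
    \<and> (\<forall>\<beta> u. (\<forall>F\<in>faces_of_dim n d. \<beta> F \<in> Vring V F) \<longrightarrow> u \<in> Vsub n V (d + 1) \<longrightarrow>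
          (\<Sum>F\<in>faces_of_dim n d. E F {..n} (\<beta> F)) + u = 0 \<longrightarrow>
          (\<forall>F\<in>faces_of_dim n d. E F {..n} (\<beta> F) = 0) \<and> u = 0)"
proof -
  interpret consistent_extension_family n k V E
    using assms(1-4) by unfold_locales
  show ?thesis
    using Vsub_subset_Wsub_plus Wsub_plus_subset_Vsub[OF assms(5)] Wsum_plus_Vsub_eq_0
    by blast
qed

end
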